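(* Let $G$ be a finite connected $k$-regular simple graph on $n\ge 2$ vertices, and let $\mu_1$ be the second largest eigenvalue of its adjacency matrix. Then $$k-\mu_1 < 2k\,\lambda(G)\sqrt{\frac{n}{\lfloor n/2\rfloor}}.$$
   Context: The eigenvalues of the adjacency matrix of $G$ are listed as $\mu_0\ge\mu_1\ge\cdots\ge\mu_{n-1}$ (so $\mu_0=k$ for connected $k$-regular $G$). An $L(2,1)$-colouring of $G$ is a map $f:V\to\mathbb{Z}_{\ge 0}$ with $|f(u)-f(v)|\ge 2$ whenever $u,v$ are adjacent and $|f(u)-f(v)|\ge 1$ whenever $u,v$ are at distance two. Its span is $\max f-\min f$, and $\lambda(G)$ denotes the minimum span over all $L(2,1)$-colourings of $G$. *)

theory Defs
  imports Complex_Main "Jordan_Normal_Form.Char_Poly"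
begin

text \<open>A finite simple graph on the vertex set {0..<n}, given by an edge relation E
  (only pairs of vertices below n are relevant).\<close>

definition simple_graph :: "nat \<Rightarrow> (nat \<Rightarrow> nat \<Rightarrow> bool) \<Rightarrow> bool" where
  "simple_graph n E \<longleftrightarrow> (\<forall>u<n. \<forall>v<n. E u v \<longleftrightarrow> E v u) \<and> (\<forall>u<n. \<not> E u u)"

definition neighbours :: "nat \<Rightarrow> (nat \<Rightarrow> nat \<Rightarrow> bool) \<Rightarrow> nat \<Rightarrow> nat set" where
  "neighbours n E u = {v. v < n \<and> E u v}"

definition regular_graph :: "nat \<Rightarrow> (nat \<Rightarrow> nat \<Rightarrow> bool) \<Rightarrow> nat \<Rightarrow> bool" where
  "regular_graph n E k \<longleftrightarrow> (\<forall>u<n. card (neighbours n E u) = k)"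

definition connected_graph :: "nat \<Rightarrow> (nat \<Rightarrow> nat \<Rightarrow> bool) \<Rightarrow> bool" where
  "connected_graph n E \<longleftrightarrow>
     (\<forall>u<n. \<forall>v<n. (\<lambda>x y. x < n \<and> y < n \<and> E x y)\<^sup>*\<^sup>* u v)"

definition dist_two :: "nat \<Rightarrow> (nat \<Rightarrow> nat \<Rightarrow> bool) \<Rightarrow> nat \<Rightarrow> nat \<Rightarrow> bool" where
  "dist_two n E u v \<longleftrightarrow> u \<noteq> v \<and> \<not> E u v \<and> (\<exists>w<n. E u w \<and> E w v)"

definition L21_colouring :: "nat \<Rightarrow> (nat \<Rightarrow> nat \<Rightarrow> bool) \<Rightarrow> (nat \<Rightarrow> nat) \<Rightarrow> bool" where
  "L21_colouring n E f \<longleftrightarrow>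
     (\<forall>u<n. \<forall>v<n. E u v \<longrightarrow> \<bar>int (f u) - int (f v)\<bar> \<ge> 2) \<and>
     (\<forall>u<n. \<forall>v<n. dist_two n E u v \<longrightarrow> \<bar>int (f u) - int (f v)\<bar> \<ge> 1)"

definition colouring_span :: "nat \<Rightarrow> (nat \<Rightarrow> nat) \<Rightarrow> nat" where
  "colouring_span n f = Max (f ` {0..<n}) - Min (f ` {0..<n})"

definition lambda21 :: "nat \<Rightarrow> (nat \<Rightarrow> nat \<Rightarrow> bool) \<Rightarrow> nat" where
  "lambda21 n E = (LEAST s. \<exists>f. L21_colouring n E f \<and> colouring_span n f = s)"

definition adj_matrix :: "nat \<Rightarrow> (nat \<Rightarrow> nat \<Rightarrow> bool) \<Rightarrow> real mat" where
  "adj_matrix n E = mat n n (\<lambda>(i, j). if E i j then 1 else 0)"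

definition eigenvalues_desc :: "real mat \<Rightarrow> real list" where
  "eigenvalues_desc A = (THE es. sorted_wrt (\<ge>) es \<and>
      char_poly A = prod_list (map (\<lambda>a. [:- a, 1:]) es))"

end

theory Submission
  imports Defs
begin

text \<open>Every eigenvalue of a matrix is bounded in absolute
  value by its largest absolute row sum, so \<open>|\<mu>\<^sub>1| \<le> k\<close> and the left-hand side is at most \<open>2k\<close>.
  Connectivity and \<open>n \<ge> 2\<close> give an edge, hence \<open>k \<ge> 1\<close>, and the two ends of that edge receive
  colours at distance at least two, hence \<open>\<lambda>(G) \<ge> 2\<close>. As the square root is at least one, the
  right-hand side is at least \<open>4k > 2k\<close>.\<close>

lemma eigenvector_row_equation:
  fixes A :: "'a::comm_ring_1 mat"
  assumes A: "A \<in> carrier_mat n n" and ev: "eigenvector A v r" and i: "i < n"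
  shows "(\<Sum>j<n. A $$ (i, j) * v $ j) = r * v $ i"
proof -
  have v: "v \<in> carrier_vec n" "A *\<^sub>v v = r \<cdot>\<^sub>v v"
    using ev A unfolding eigenvector_def by auto
  have "(\<Sum>j<n. A $$ (i, j) * v $ j) = (A *\<^sub>v v) $ i"
    using A v(1) i by (auto simp: scalar_prod_def lessThan_atLeast0 intro!: sum.cong)
  also have "\<dots> = r * v $ i"
    using v i by simp
  finally show ?thesis .
qed

lemma eigenvector_nonzero_entry:
  assumes "A \<in> carrier_mat n n" and "eigenvector A v r"
  obtains i where "i < n" and "v $ i \<noteq> 0"
  using assms unfolding eigenvector_def
  by (metis vec_eq_iff carrier_matD(1) carrier_vecD index_zero_vec(1,2))

lemma eigenvalue_real_symmetric_in_Reals: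
  fixes A :: "real mat"
  assumes A: "A \<in> carrier_mat n n"
    and sym: "\<And>i j. i < n \<Longrightarrow> j < n \<Longrightarrow> A $$ (i, j) = A $$ (j, i)"
    and ev: "eigenvalue (map_mat complex_of_real A) a"
  shows "a \<in> \<real>"
proof -
  let ?B = "map_mat complex_of_real A"
  have B: "?B \<in> carrier_mat n n"
    using A by simp
  obtain v where v: "eigenvector ?B v a"
    using ev unfolding eigenvalue_def by blast
  define Q where "Q = (\<Sum>i<n. \<Sum>j<n. cnj (v $ i) * ?B $$ (i, j) * v $ j)"
  define N where "N = (\<Sum>i<n. (cmod (v $ i))\<^sup>2)"
  have "Q = (\<Sum>i<n. cnj (v $ i) * (\<Sum>j<n. ?B $$ (i, j) * v $ j))"
    unfolding Q_def by (simp add: sum_distrib_left mult.assoc)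
  also have "\<dots> = (\<Sum>i<n. a * (v $ i * cnj (v $ i)))"
    using eigenvector_row_equation[OF B v] by (intro sum.cong) auto
  also have "\<dots> = a * of_real N"
    unfolding N_def of_real_sum complex_norm_square by (simp add: sum_distrib_left)
  finally have Q_eq: "Q = a * of_real N" .
  \<comment> \<open>\<open>v\<^sup>* B v\<close> is self-conjugate because \<open>B\<close> is real and symmetric.\<close>
  have "cnj Q = (\<Sum>i<n. \<Sum>j<n. cnj (v $ j) * ?B $$ (j, i) * v $ i)"
    unfolding Q_def cnj_sum using A sym by (auto intro!: sum.cong simp: mult.commute mult.left_commute)
  also have "\<dots> = Q"
    unfolding Q_def by (rule sum.swap)
  finally have "cnj Q = Q" .
  moreover obtain i where "i < n" "v $ i \<noteq> 0"
    using eigenvector_nonzero_entry[OF B v] .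
  then have "N > 0"
    unfolding N_def by (intro sum_pos2[of _ i]) auto
  ultimately have "cnj a = a"
    using Q_eq by simp
  then show ?thesis
    by (metis Reals_cnj_iff)
qed

lemma eigenvalue_abs_le_max_row_sum:
  fixes A :: "real mat"
  assumes A: "A \<in> carrier_mat n n"
    and rows: "\<And>i. i < n \<Longrightarrow> (\<Sum>j<n. \<bar>A $$ (i, j)\<bar>) \<le> c"
    and ev: "eigenvalue A r"
  shows "\<bar>r\<bar> \<le> c"
proof -
  obtain v where v: "eigenvector A v r"
    using ev unfolding eigenvalue_def by blast
  obtain i0 where i0: "i0 < n" "v $ i0 \<noteq> 0"
    using eigenvector_nonzero_entry[OF A v] .
  define m where "m = Max ((\<lambda>j. \<bar>v $ j\<bar>) ` {..<n})"
  have fin: "finite ((\<lambda>j. \<bar>v $ j\<bar>) ` {..<n})" "(\<lambda>j. \<bar>v $ j\<bar>) ` {..<n} \<noteq> {}"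
    using i0 by auto
  obtain i where i: "i < n" "\<bar>v $ i\<bar> = m"
    using Max_in[OF fin] unfolding m_def by auto
  have le_m: "\<bar>v $ j\<bar> \<le> m" if "j < n" for j
    unfolding m_def using fin that by auto
  have "m > 0"
    using le_m[OF i0(1)] i0(2) by simp
  have "\<bar>r\<bar> * m = \<bar>\<Sum>j<n. A $$ (i, j) * v $ j\<bar>"
    using eigenvector_row_equation[OF A v i(1)] i(2) by (simp add: abs_mult)
  also have "\<dots> \<le> (\<Sum>j<n. \<bar>A $$ (i, j)\<bar> * m)"
    using le_m by (intro order_trans[OF sum_abs] sum_mono) (simp add: abs_mult mult_left_mono)
  also have "\<dots> \<le> c * m"
    using rows[OF i(1)] \<open>m > 0\<close> by (simp add: sum_distrib_right[symmetric])
  finally show ?thesis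
    using \<open>m > 0\<close> by simp
qed

lemma proots_linear_factors: "proots (\<Prod>a\<leftarrow>xs. [:- a, 1:]) = mset (xs :: 'a::idom list)"
proof -
  have "proots (\<Prod>p\<leftarrow>map (\<lambda>a. [:- a, 1:]) xs. p) = (\<Sum>p\<leftarrow>map (\<lambda>a. [:- a, 1:]) xs. proots p)"
    by (rule proots_prod_list) auto
  also have "\<dots> = mset xs"
    by (induction xs) auto
  finally show ?thesis
    by simp
qed

lemma char_poly_real_symmetric_splits:
  fixes A :: "real mat"
  assumes A: "A \<in> carrier_mat n n"
    and sym: "\<And>i j. i < n \<Longrightarrow> j < n \<Longrightarrow> A $$ (i, j) = A $$ (j, i)"
  obtains rs where "char_poly A = (\<Prod>a\<leftarrow>rs. [:- a, 1:])"
proof -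
  let ?B = "map_mat complex_of_real A"
  interpret of_real_poly: map_poly_inj_idom_hom "of_real :: real \<Rightarrow> complex" ..
  have B: "?B \<in> carrier_mat n n"
    using A by simp
  obtain as where as: "char_poly ?B = (\<Prod>a\<leftarrow>as. [:- a, 1:])"
    using char_poly_factorized[OF B] by blast
  have "a \<in> \<real>" if "a \<in> set as" for a
  proof (rule eigenvalue_real_symmetric_in_Reals[OF A sym])
    show "eigenvalue ?B a"
      unfolding eigenvalue_root_char_poly[OF B] as using that
      by (auto simp: poly_prod_list prod_list_zero_iff)
  qed
  then have as_real: "as = map (of_real \<circ> Re) as"
    by (intro map_idI[symmetric]) (simp add: Reals_cases)
  have "map_poly complex_of_real (char_poly A) = char_poly ?B"
    by (rule of_real_hom.char_poly_hom[OF A, symmetric])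
  also have "\<dots> = map_poly complex_of_real (\<Prod>a\<leftarrow>map Re as. [:- a, 1:])"
    unfolding as of_real_poly.hom_prod_list
    by (subst as_real) (simp add: o_def)
  finally show ?thesis
    using that[of "map Re as"] by (simp add: o_def)
qed

lemma eigenvalues_desc_char_poly:
  assumes "char_poly A = (\<Prod>a\<leftarrow>rs. [:- a, 1:])"
  shows "char_poly A = (\<Prod>a\<leftarrow>eigenvalues_desc A. [:- a, 1:])"
proof -
  let ?P = "\<lambda>es. sorted_wrt (\<ge>) es \<and> char_poly A = (\<Prod>a\<leftarrow>es. [:- a, 1:])"
  have factors_mset: "mset es = mset rs" if "char_poly A = (\<Prod>a\<leftarrow>es. [:- a, 1:])" for es
    using arg_cong[OF that, of proots] assms by (simp add: proots_linear_factors)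
  define es where "es = rev (sort rs)"
  have "mset es = mset rs"
    by (simp add: es_def)
  then have "?P es"
    using assms by (auto simp: es_def sorted_wrt_rev prod_mset_prod_list[symmetric]
        mset_map)
  moreover have "xs = es" if "?P xs" for xs
  proof -
    have "sort rs = rev xs"
      using that factors_mset by (intro properties_for_sort) (auto simp: sorted_wrt_rev)
    then show ?thesis
      by (simp add: es_def)
  qed
  ultimately have "?P (eigenvalues_desc A)"
    unfolding eigenvalues_desc_def by (rule theI)
  then show ?thesis
    by simp
qed

lemma eigenvalues_desc_real_symmetric:
  fixes A :: "real mat"
  assumes A: "A \<in> carrier_mat n n"
    and sym: "\<And>i j. i < n \<Longrightarrow> j < n \<Longrightarrow> A $$ (i, j) = A $$ (j, i)"
  shows "length (eigenvalues_desc A) = n"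
    and "\<And>r. r \<in> set (eigenvalues_desc A) \<Longrightarrow> eigenvalue A r"
proof -
  obtain rs where "char_poly A = (\<Prod>a\<leftarrow>rs. [:- a, 1:])"
    using char_poly_real_symmetric_splits[OF A sym] .
  then have cp: "char_poly A = (\<Prod>a\<leftarrow>eigenvalues_desc A. [:- a, 1:])"
    by (rule eigenvalues_desc_char_poly)
  show "length (eigenvalues_desc A) = n"
    using degree_linear_factors[of uminus "eigenvalues_desc A"] degree_monic_char_poly[OF A] cp
    by simp
  show "eigenvalue A r" if "r \<in> set (eigenvalues_desc A)" for r
    unfolding eigenvalue_root_char_poly[OF A] cp using that
    by (auto simp: poly_prod_list prod_list_zero_iff)
qed

lemma adj_matrix_carrier [simp]: "adj_matrix n E \<in> carrier_mat n n"
  by (simp add: adj_matrix_def)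

lemma adj_matrix_index:
  "i < n \<Longrightarrow> j < n \<Longrightarrow> adj_matrix n E $$ (i, j) = (if E i j then 1 else 0)"
  by (simp add: adj_matrix_def)

lemma adj_matrix_symmetric:
  "simple_graph n E \<Longrightarrow> i < n \<Longrightarrow> j < n \<Longrightarrow> adj_matrix n E $$ (i, j) = adj_matrix n E $$ (j, i)"
  by (simp add: adj_matrix_index simple_graph_def)

lemma adj_matrix_abs_row_sum:
  assumes "i < n"
  shows "(\<Sum>j<n. \<bar>adj_matrix n E $$ (i, j)\<bar>) = real (card (neighbours n E i))"
proof -
  have "(\<Sum>j<n. \<bar>adj_matrix n E $$ (i, j)\<bar>) = (\<Sum>j<n. if E i j then 1 else 0)"
    using assms by (intro sum.cong) (auto simp: adj_matrix_index)
  also have "\<dots> = real (card ({..<n} \<inter> Collect (E i)))"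
    by (simp add: sum.If_cases)
  also have "{..<n} \<inter> Collect (E i) = neighbours n E i"
    unfolding neighbours_def by auto
  finally show ?thesis .
qed

lemma connected_graph_has_neighbour:
  assumes "connected_graph n E" and "u < n" and "v < n" and "u \<noteq> v"
  obtains w where "w < n" and "E u w"
proof -
  have "(\<lambda>x y. x < n \<and> y < n \<and> E x y)\<^sup>*\<^sup>* u v"
    using assms(1-3) unfolding connected_graph_def by blast
  then show ?thesis
    using that \<open>u \<noteq> v\<close> by (cases rule: converse_rtranclpE) auto
qed

lemma L21_colouring_double:
  assumes "simple_graph n E"
  shows "L21_colouring n E (\<lambda>u. 2 * u)"
  unfolding L21_colouring_def dist_two_def
proof (intro conjI allI impI)
  fix u v
  assume "u < n" "v < n" "E u v"
  then have "u \<noteq> v"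
    using assms unfolding simple_graph_def by blast
  then show "\<bar>int (2 * u) - int (2 * v)\<bar> \<ge> 2"
    by linarith
next
  fix u v
  assume "u \<noteq> v \<and> \<not> E u v \<and> (\<exists>w<n. E u w \<and> E w v)"
  then show "\<bar>int (2 * u) - int (2 * v)\<bar> \<ge> 1"
    by linarith
qed

lemma lambda21_attained:
  assumes "simple_graph n E"
  obtains f where "L21_colouring n E f" and "colouring_span n f = lambda21 n E"
proof -
  have "\<exists>s f. L21_colouring n E f \<and> colouring_span n f = s"
    using L21_colouring_double[OF assms] by blast
  then have "\<exists>f. L21_colouring n E f \<and> colouring_span n f = lambda21 n E"
    unfolding lambda21_def by (rule LeastI_ex)
  then show ?thesis
    using that by blast
qed

lemma colour_distance_le_span:
  assumes "u < n" and "v < n"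
  shows "\<bar>int (f u) - int (f v)\<bar> \<le> int (colouring_span n f)"
proof -
  have bounds: "Min (f ` {0..<n}) \<le> f x \<and> f x \<le> Max (f ` {0..<n})" if "x < n" for x
    using that by auto
  show ?thesis
    using bounds[OF assms(1)] bounds[OF assms(2)] unfolding colouring_span_def
    by (simp add: of_nat_diff abs_le_iff)
qed

lemma lambda21_ge_2:
  assumes "simple_graph n E" and "u < n" and "v < n" and "E u v"
  shows "lambda21 n E \<ge> 2"
proof -
  obtain f where f: "L21_colouring n E f" "colouring_span n f = lambda21 n E"
    using lambda21_attained[OF assms(1)] .
  have "2 \<le> \<bar>int (f u) - int (f v)\<bar>"
    using f(1) assms(2-4) unfolding L21_colouring_def by blast
  also have "\<dots> \<le> int (lambda21 n E)"
    using colour_distance_le_span[OF assms(2,3), of f] f(2) by simp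
  finally show ?thesis
    by simp
qed

theorem corollary2p3:
  fixes n k :: nat and E :: "nat \<Rightarrow> nat \<Rightarrow> bool"
  assumes "n \<ge> 2"
    and "simple_graph n E"
    and "connected_graph n E"
    and "regular_graph n E k"
  shows "real k - eigenvalues_desc (adj_matrix n E) ! 1
           < 2 * real k * real (lambda21 n E) * sqrt (real n / real (n div 2))"
proof -
  let ?A = "adj_matrix n E" and ?\<mu>\<^sub>1 = "eigenvalues_desc (adj_matrix n E) ! 1"
  note sym = adj_matrix_symmetric[OF assms(2)]
  have degree: "card (neighbours n E u) = k" if "u < n" for u
    using assms(4) that unfolding regular_graph_def by blast
  obtain w where w: "w < n" "E 0 w"
    using connected_graph_has_neighbour[OF assms(3), of 0 1] assms(1) by auto
  have "k \<ge> 1"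
    using w degree[of 0] assms(1) card_gt_0_iff[of "neighbours n E 0"]
    by (auto simp: neighbours_def)
  have "eigenvalue ?A ?\<mu>\<^sub>1"
    using eigenvalues_desc_real_symmetric[OF adj_matrix_carrier sym] assms(1) by simp
  then have "\<bar>?\<mu>\<^sub>1\<bar> \<le> real k"
    by (intro eigenvalue_abs_le_max_row_sum[OF adj_matrix_carrier])
      (simp_all add: adj_matrix_abs_row_sum degree)
  then have "real k - ?\<mu>\<^sub>1 \<le> 2 * real k"
    by simp
  also have "\<dots> < 2 * real k * 2 * 1"
    using \<open>k \<ge> 1\<close> by simp
  also have "\<dots> \<le> 2 * real k * real (lambda21 n E) * sqrt (real n / real (n div 2))"
  proof (intro mult_mono)
    show "2 \<le> real (lambda21 n E)"
      using lambda21_ge_2[OF assms(2) _ w] assms(1) by simp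
    show "1 \<le> sqrt (real n / real (n div 2))"
      using assms(1) by simp
  qed auto
  finally show ?thesis .
qed

end
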